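(* Let $L\ge2$, $w\in\mathbb R\setminus\{0\}$, $\theta\in\mathbb R$, and consider on $\mathcal F(\mathbb C^L)$ the Hamiltonians, for $\alpha\in[0,\pi]$, $$\mathbf H^{\mathrm{Kit}}_\Lambda(\alpha)=w\sum_{j=1}^{L-1}\big(-{\mathfrak a}_j^*{\mathfrak a}_{j+1}-{\mathfrak a}_{j+1}^*{\mathfrak a}_j+e^{i\theta}{\mathfrak a}_j{\mathfrak a}_{j+1}+e^{-i\theta}{\mathfrak a}_{j+1}^*{\mathfrak a}_j^*\big)+w\big(-e^{-i\alpha}{\mathfrak a}_L^*{\mathfrak a}_1-e^{i\alpha}{\mathfrak a}_1^*{\mathfrak a}_L+e^{i\theta}e^{i\alpha}{\mathfrak a}_L{\mathfrak a}_1+e^{-i\theta}e^{-i\alpha}{\mathfrak a}_1^*{\mathfrak a}_L^*\big)$$ (the Kitaev chain with $\mu=0$, $\Delta=e^{i\theta}w$ and a flux $\alpha$ inserted in the boundary bond). Then the $\mathbb Z_2$-valued spectral flow of the path $\alpha\in[0,\pi]\mapsto\mathbf H^{\mathrm{Kit}}_\Lambda(\alpha)$ is non-trivial, i.e. $\mathrm{Sf}_2(A_\Lambda(0),A_\Lambda(\pi))=-1$.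
   Context: $\mathcal F(\mathbb C^L)$ is the fermionic Fock space with CAR operators ${\mathfrak a}_j$, $j=1,\dots,L$. Majorana operators: ${\mathfrak b}_{2j-1}=e^{i\theta/2}{\mathfrak a}_j+e^{-i\theta/2}{\mathfrak a}_j^*$, ${\mathfrak b}_{2j}=-ie^{i\theta/2}{\mathfrak a}_j+ie^{-i\theta/2}{\mathfrak a}_j^*$, ordered as ${\mathfrak b}=({\mathfrak b}_1,{\mathfrak b}_3,\dots,{\mathfrak b}_{2L-1},{\mathfrak b}_2,\dots,{\mathfrak b}_{2L})^t$. In these variables $\mathbf H^{\mathrm{Kit}}_\Lambda(\alpha)=iw\sum_{j=1}^{L-1}{\mathfrak b}_{2j}{\mathfrak b}_{2j+1}+iw\cos(\alpha){\mathfrak b}_{2L}{\mathfrak b}_1-iw\sin(\alpha){\mathfrak b}_{2L}{\mathfrak b}_2$, and $A_\Lambda(\alpha)$ denotes the unique real skew-symmetric matrix with $\mathbf H^{\mathrm{Kit}}_\Lambda(\alpha)=\frac i2{\mathfrak b}^tA_\Lambda(\alpha){\mathfrak b}$. For invertible real skew-symmetric $T_0,T_1$, $\mathrm{Sf}_2(T_0,T_1)=\mathrm{sgn}\det(M)$ for any invertible real $M$ with $T_1=MT_0M^*$; the $\mathbb Z_2$-valued spectral flow of a path with invertible endpoints is $\mathrm{Sf}_2$ of its endpoints. *)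

theory Defs
  imports Complex_Main "Jordan_Normal_Form.Determinant"
begin

text \<open>Operators on the fermionic Fock space F(C^L), represented by their matrix
kernels with respect to the occupation-number basis |S>, S a subset of {1..L}
(S = set of occupied modes). X S T is the matrix element <S|X|T>.\<close>

type_synonym fock_op = "nat set \<Rightarrow> nat set \<Rightarrow> complex"

definition op_mul :: "nat \<Rightarrow> fock_op \<Rightarrow> fock_op \<Rightarrow> fock_op" where
  "op_mul L X Y = (\<lambda>S T. \<Sum>U\<in>Pow {1..L}. X S U * Y U T)"

definition op_adj :: "fock_op \<Rightarrow> fock_op" where
  "op_adj X = (\<lambda>S T. cnj (X T S))"

definition op_eq :: "nat \<Rightarrow> fock_op \<Rightarrow> fock_op \<Rightarrow> bool" where
  "op_eq L X Y \<longleftrightarrow> (\<forall>S\<in>Pow {1..L}. \<forall>T\<in>Pow {1..L}. X S T = Y S T)"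

text \<open>CAR annihilation operator a_j (Jordan-Wigner sign convention):
a_j |T> = (-1)^{#{k in T. k < j}} |T - {j}> if j in T, and 0 otherwise.\<close>
definition ann :: "nat \<Rightarrow> fock_op" where
  "ann j = (\<lambda>S T. if j \<in> T \<and> S = T - {j} then (-1) ^ card {k\<in>T. k < j} else 0)"

definition cre :: "nat \<Rightarrow> fock_op" where
  "cre j = op_adj (ann j)"

definition kit_H :: "nat \<Rightarrow> real \<Rightarrow> real \<Rightarrow> real \<Rightarrow> fock_op" where
  "kit_H L w \<theta> \<alpha> = (\<lambda>S T.
     (\<Sum>j\<in>{1..L-1}. complex_of_real w *
        (- op_mul L (cre j) (ann (j+1)) S T - op_mul L (cre (j+1)) (ann j) S T
         + cis \<theta> * op_mul L (ann j) (ann (j+1)) S T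
         + cis (-\<theta>) * op_mul L (cre (j+1)) (cre j) S T))
   + complex_of_real w *
        (- cis (-\<alpha>) * op_mul L (cre L) (ann 1) S T - cis \<alpha> * op_mul L (cre 1) (ann L) S T
         + cis \<theta> * cis \<alpha> * op_mul L (ann L) (ann 1) S T
         + cis (-\<theta>) * cis (-\<alpha>) * op_mul L (cre 1) (cre L) S T))"

definition maj :: "real \<Rightarrow> nat \<Rightarrow> fock_op" where
  "maj \<theta> k = (if odd k
     then (\<lambda>S T. cis (\<theta>/2) * ann ((k+1) div 2) S T + cis (-\<theta>/2) * cre ((k+1) div 2) S T)
     else (\<lambda>S T. - \<i> * cis (\<theta>/2) * ann (k div 2) S T + \<i> * cis (-\<theta>/2) * cre (k div 2) S T))"

text \<open>The ordered vector b = (b_1,b_3,...,b_{2L-1},b_2,...,b_{2L}), 0-based index p < 2L.\<close>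
definition bvec :: "nat \<Rightarrow> real \<Rightarrow> nat \<Rightarrow> fock_op" where
  "bvec L \<theta> p = (if p < L then maj \<theta> (2*p+1) else maj \<theta> (2*(p-L)+2))"

definition maj_quad :: "nat \<Rightarrow> real \<Rightarrow> real mat \<Rightarrow> fock_op" where
  "maj_quad L \<theta> A = (\<lambda>S T. (\<i>/2) *
     (\<Sum>p<2*L. \<Sum>q<2*L. complex_of_real (A $$ (p,q)) * op_mul L (bvec L \<theta> p) (bvec L \<theta> q) S T))"

definition kit_A :: "nat \<Rightarrow> real \<Rightarrow> real \<Rightarrow> real \<Rightarrow> real mat" where
  "kit_A L w \<theta> \<alpha> = (THE A. A \<in> carrier_mat (2*L) (2*L) \<and> transpose_mat A = - A
       \<and> op_eq L (kit_H L w \<theta> \<alpha>) (maj_quad L \<theta> A))"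

definition Sf2 :: "real mat \<Rightarrow> real mat \<Rightarrow> real" where
  "Sf2 T0 T1 = (SOME s. \<exists>M \<in> carrier_mat (dim_row T0) (dim_row T0).
       invertible_mat M \<and> T1 = M * T0 * transpose_mat M \<and> s = sgn (det M))"

end

(* At flux 0 and \<pi> the Hamiltonian is (i/2) b^t A b with A(0), A(\<pi>) differing only in the sign of
   the boundary coupling of b_{2L} and b_1, so A(\<pi>) = D A(0) D^t for D = diag(-1, 1, ..., 1), and
   det D = -1.  Every other M with A(\<pi>) = M A(0) M^t has the same determinant, because
   Pf (M A M^t) = det M Pf A and Pf A(0) \<noteq> 0: reordering the Majoranas into the pairs coupled by
   H(0) turns A(0) into -w times the standard symplectic form. *)

theory Submission
  imports Defs
begin

section \<open>Pfaffians under congruence\<close>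

definition pfaffian_term :: "nat \<Rightarrow> 'a::comm_ring_1 mat \<Rightarrow> (nat \<Rightarrow> nat) \<Rightarrow> 'a" where
  "pfaffian_term n A p = signof p * (\<Prod>i<n. A $$ (p (2*i), p (2*i+1)))"

text \<open>\<open>2\<^sup>n n!\<close> times the Pfaffian of a \<open>2n \<times> 2n\<close> matrix; the normalisation is irrelevant here.\<close>
definition pfaffian_sum :: "nat \<Rightarrow> 'a::comm_ring_1 mat \<Rightarrow> 'a" where
  "pfaffian_sum n A = (\<Sum>p\<in>{p. p permutes {0..<2*n}}. pfaffian_term n A p)"

lemma prod_lessThan_double:
  fixes n :: nat
  shows "(\<Prod>x<2*n. h x) = (\<Prod>i<n. h (2*i) * (h (2*i+1) :: 'a::comm_monoid_mult))"
proof (induction n)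
  case (Suc n)
  have "(\<Prod>x<2 * Suc n. h x) = (\<Prod>x<2*n. h x) * (h (2*n) * h (2*n+1))"
    by (simp add: ac_simps)
  then show ?case using Suc by simp
qed simp

lemma congruence_mat_entry:
  assumes "B \<in> carrier_mat N N" "A \<in> carrier_mat N N" "x < N" "y < N"
  shows "(B * A * transpose_mat B) $$ (x,y) =
         (\<Sum>k\<in>{0..<N}. \<Sum>l\<in>{0..<N}. B $$ (x,k) * A $$ (k,l) * B $$ (y,l))"
  using assms by (simp add: index_mult_mat scalar_prod_def sum_distrib_left mult.assoc)

definition interleave :: "nat \<Rightarrow> (nat \<Rightarrow> nat \<times> nat) \<Rightarrow> nat \<Rightarrow> nat" where
  "interleave n h x =
     (if x < 2*n then (if even x then fst (h (x div 2)) else snd (h (x div 2))) else x)"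

definition deinterleave :: "nat \<Rightarrow> (nat \<Rightarrow> nat) \<Rightarrow> nat \<Rightarrow> nat \<times> nat" where
  "deinterleave n f i = (if i < n then (f (2*i), f (2*i+1)) else undefined)"

lemma interleave_even: "i < n \<Longrightarrow> interleave n h (2*i) = fst (h i)"
  and interleave_odd: "i < n \<Longrightarrow> interleave n h (Suc (2*i)) = snd (h i)"
  unfolding interleave_def by simp_all

lemma deinterleave_interleave:
  assumes "h \<in> {..<n} \<rightarrow>\<^sub>E X"
  shows "deinterleave n (interleave n h) = h"
proof
  fix i
  show "deinterleave n (interleave n h) i = h i"
    using assms by (cases "i < n") (simp_all add: deinterleave_def interleave_def PiE_def extensional_def)
qed

lemma interleave_deinterleave:
  assumes "\<And>x. x \<ge> 2*n \<Longrightarrow> f x = x"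
  shows "interleave n (deinterleave n f) = f"
proof
  fix x :: nat
  show "interleave n (deinterleave n f) x = f x"
  proof (cases "x < 2*n")
    case True
    then have "x div 2 < n" by simp
    moreover have "2 * (x div 2) = x" if "even x" using that by simp
    moreover have "2 * (x div 2) + 1 = x" if "odd x" using that by presburger
    ultimately show ?thesis using True by (simp add: interleave_def deinterleave_def)
  qed (use assms in \<open>simp add: interleave_def\<close>)
qed

lemma prod_sum_pairs:
  fixes G :: "nat \<Rightarrow> nat \<Rightarrow> nat \<Rightarrow> 'a::comm_semiring_1"
  shows "(\<Prod>i<n. \<Sum>k\<in>{0..<2*n}. \<Sum>l\<in>{0..<2*n}. G i k l) =
    (\<Sum>f\<in>{f. (\<forall>x\<in>{0..<2*n}. f x \<in> {0..<2*n}) \<and> (\<forall>x. x \<notin> {0..<2*n} \<longrightarrow> f x = x)}.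
       \<Prod>i<n. G i (f (2*i)) (f (2*i+1)))"
proof -
  define U where "U = {0..<2*n}"
  let ?F = "{f. (\<forall>x\<in>U. f x \<in> U) \<and> (\<forall>x. x \<notin> U \<longrightarrow> f x = x)}"
  have "(\<Prod>i<n. \<Sum>k\<in>U. \<Sum>l\<in>U. G i k l) = (\<Prod>i<n. \<Sum>(k,l)\<in>U \<times> U. G i k l)"
    by (simp add: sum.cartesian_product)
  also have "\<dots> = (\<Sum>h\<in>{..<n} \<rightarrow>\<^sub>E U \<times> U. \<Prod>i<n. case h i of (k,l) \<Rightarrow> G i k l)"
    by (rule prod_sum_PiE) (auto simp: U_def)
  also have "\<dots> = (\<Sum>f\<in>?F. \<Prod>i<n. G i (f (2*i)) (f (2*i+1)))"
  proof (rule sum.reindex_bij_witness[where i = "deinterleave n" and j = "interleave n"])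
    fix h assume h: "h \<in> {..<n} \<rightarrow>\<^sub>E U \<times> U"
    then show "deinterleave n (interleave n h) = h" by (rule deinterleave_interleave)
    have "h (x div 2) \<in> U \<times> U" if "x < 2*n" for x
      using PiE_mem[OF h, of "x div 2"] that by simp
    then show "interleave n h \<in> ?F"
      unfolding interleave_def U_def by (force simp: mem_Times_iff)
    show "(\<Prod>i<n. G i (interleave n h (2*i)) (interleave n h (2*i+1))) =
          (\<Prod>i<n. case h i of (k,l) \<Rightarrow> G i k l)"
      by (intro prod.cong refl) (simp add: interleave_even interleave_odd split: prod.splits)
  next
    fix f assume f: "f \<in> ?F"
    then show "interleave n (deinterleave n f) = f"
      by (intro interleave_deinterleave) (auto simp: U_def)
    show "deinterleave n f \<in> {..<n} \<rightarrow>\<^sub>E U \<times> U"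
      using f by (auto simp: deinterleave_def PiE_def extensional_def U_def)
  qed
  finally show ?thesis unfolding U_def .
qed

lemma det_reindexed_transpose_permutes:
  assumes B: "B \<in> carrier_mat N N" and f: "f permutes {0..<N}"
  shows "det (mat N N (\<lambda>(i,j). B $$ (j, f i))) = signof f * det B"
proof -
  have "mat N N (\<lambda>(i,j). B $$ (j, f i)) = mat N N (\<lambda>(i,j). transpose_mat B $$ (f i, j))"
    using B permutes_in_image[OF f] by (intro eq_matI) auto
  then show ?thesis
    using det_permute_rows[OF _ f, of "transpose_mat B"] det_transpose[OF B] B by simp
qed

lemma det_reindexed_transpose_not_inj:
  assumes "\<not> inj_on f {0..<N}"
  shows "det (mat N N (\<lambda>(i,j). B $$ (j, f i))) = 0"
proof -
  from assms obtain i j where ij: "f i = f j" "i \<noteq> j" "i < N" "j < N"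
    unfolding inj_on_def by auto
  have "row (mat N N (\<lambda>(i,j). B $$ (j, f i))) i = row (mat N N (\<lambda>(i,j). B $$ (j, f i))) j"
    using ij by (intro eq_vecI) simp_all
  then show ?thesis by (rule det_identical_rows[OF mat_carrier ij(2-4)])
qed

lemma pfaffian_sum_congruence_term:
  fixes A B :: "'a::comm_semiring_1 mat"
  assumes B: "B \<in> carrier_mat (2*n) (2*n)" and A: "A \<in> carrier_mat (2*n) (2*n)"
    and p: "p permutes {0..<2*n}"
  shows "(\<Prod>i<n. (B * A * transpose_mat B) $$ (p (2*i), p (2*i+1))) =
    (\<Sum>f\<in>{f. (\<forall>x\<in>{0..<2*n}. f x \<in> {0..<2*n}) \<and> (\<forall>x. x \<notin> {0..<2*n} \<longrightarrow> f x = x)}.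
       (\<Prod>i<n. A $$ (f (2*i), f (2*i+1))) * (\<Prod>x\<in>{0..<2*n}. B $$ (p x, f x)))"
proof -
  have "p x < 2*n" if "x < 2*n" for x
    using permutes_in_image[OF p] that by simp
  then have "(\<Prod>i<n. (B * A * transpose_mat B) $$ (p (2*i), p (2*i+1))) =
      (\<Prod>i<n. \<Sum>k\<in>{0..<2*n}. \<Sum>l\<in>{0..<2*n}. B $$ (p (2*i), k) * A $$ (k,l) * B $$ (p (2*i+1), l))"
    by (intro prod.cong refl) (simp add: congruence_mat_entry[OF B A])
  also have "\<dots> = (\<Sum>f\<in>{f. (\<forall>x\<in>{0..<2*n}. f x \<in> {0..<2*n}) \<and> (\<forall>x. x \<notin> {0..<2*n} \<longrightarrow> f x = x)}.
      \<Prod>i<n. B $$ (p (2*i), f (2*i)) * A $$ (f (2*i), f (2*i+1)) * B $$ (p (2*i+1), f (2*i+1)))"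
    by (rule prod_sum_pairs[where G = "\<lambda>i k l. B $$ (p (2*i), k) * A $$ (k,l) * B $$ (p (2*i+1), l)"])
  also have "\<dots> = (\<Sum>f\<in>{f. (\<forall>x\<in>{0..<2*n}. f x \<in> {0..<2*n}) \<and> (\<forall>x. x \<notin> {0..<2*n} \<longrightarrow> f x = x)}.
      (\<Prod>i<n. A $$ (f (2*i), f (2*i+1))) * (\<Prod>x\<in>{0..<2*n}. B $$ (p x, f x)))"
    unfolding atLeast0LessThan prod_lessThan_double by (simp add: prod.distrib ac_simps)
  finally show ?thesis .
qed

lemma pfaffian_sum_congruence:
  assumes B: "B \<in> carrier_mat (2*n) (2*n)" and A: "A \<in> carrier_mat (2*n) (2*n)"
  shows "pfaffian_sum n (B * A * transpose_mat B) = det B * pfaffian_sum n A"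
proof -
  let ?U = "{0..<2*n}"
  let ?P = "{p. p permutes ?U}"
  define F where "F = {f. (\<forall>x\<in>?U. f x \<in> ?U) \<and> (\<forall>x. x \<notin> ?U \<longrightarrow> f x = x)}"
  define PA where "PA f = (\<Prod>i<n. A $$ (f (2*i), f (2*i+1)))" for f
  define M where "M f = mat (2*n) (2*n) (\<lambda>(i,j). B $$ (j, f i))" for f
  have det_M: "det (M f) = (\<Sum>p\<in>?P. signof p * (\<Prod>x\<in>?U. B $$ (p x, f x)))" for f
    unfolding det_def'[OF mat_carrier] M_def
    by (intro sum.cong refl arg_cong2[where f = "(*)"] prod.cong) (auto dest: permutes_in_image)
  have "pfaffian_sum n (B * A * transpose_mat B) =
      (\<Sum>p\<in>?P. signof p * (\<Sum>f\<in>F. PA f * (\<Prod>x\<in>?U. B $$ (p x, f x))))"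
    unfolding pfaffian_sum_def pfaffian_term_def F_def PA_def
    by (intro sum.cong refl, subst pfaffian_sum_congruence_term[OF B A]) auto
  also have "\<dots> = (\<Sum>f\<in>F. PA f * det (M f))"
    unfolding det_M sum_distrib_left by (subst sum.swap) (simp add: ac_simps)
  also have "\<dots> = (\<Sum>f\<in>?P. PA f * det (M f))"
  proof (rule sum.mono_neutral_right)
    show "finite F" unfolding F_def by (rule finite_bounded_functions) auto
    show "?P \<subseteq> F" unfolding F_def using permutes_in_image permutes_not_in by fastforce
    have "\<not> inj_on f ?U" if "f \<in> F - ?P" for f
      using that inj_on_nat_permutes[of f ?U] unfolding F_def by auto
    then show "\<forall>f\<in>F - ?P. PA f * det (M f) = 0"
      unfolding M_def by (simp add: det_reindexed_transpose_not_inj)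
  qed
  also have "\<dots> = (\<Sum>f\<in>?P. det B * (signof f * PA f))"
    unfolding M_def by (intro sum.cong refl) (simp add: det_reindexed_transpose_permutes[OF B])
  also have "\<dots> = det B * pfaffian_sum n A"
    unfolding pfaffian_sum_def pfaffian_term_def PA_def sum_distrib_left ..
  finally show ?thesis .
qed

lemma pfaffian_sum_smult:
  assumes A: "A \<in> carrier_mat (2*n) (2*n)"
  shows "pfaffian_sum n (c \<cdot>\<^sub>m A) = c^n * pfaffian_sum n A"
proof -
  have "(\<Prod>i<n. (c \<cdot>\<^sub>m A) $$ (p (2*i), p (2*i+1))) = c^n * (\<Prod>i<n. A $$ (p (2*i), p (2*i+1)))"
    if p: "p permutes {0..<2*n}" for p
  proof -
    have "p x < 2*n" if "x < 2*n" for x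
      using permutes_in_image[OF p] that by simp
    then have "(\<Prod>i<n. (c \<cdot>\<^sub>m A) $$ (p (2*i), p (2*i+1))) = (\<Prod>i<n. c * A $$ (p (2*i), p (2*i+1)))"
      using A by (intro prod.cong refl) auto
    then show ?thesis by (simp add: prod.distrib)
  qed
  then show ?thesis
    unfolding pfaffian_sum_def pfaffian_term_def sum_distrib_left by (intro sum.cong refl) (simp add: ac_simps)
qed

section \<open>The Pfaffian of the standard symplectic form\<close>

definition symplectic_entry :: "nat \<Rightarrow> nat \<Rightarrow> 'a::comm_ring_1" where
  "symplectic_entry x y = (if even x \<and> y = x+1 then 1 else if odd x \<and> x = y+1 then -1 else 0)"

definition symplectic_mat :: "nat \<Rightarrow> 'a::comm_ring_1 mat" where
  "symplectic_mat n = mat (2*n) (2*n) (\<lambda>(x,y). symplectic_entry x y)"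

lemma symplectic_entry_skew: "symplectic_entry y x = - symplectic_entry x y"
  unfolding symplectic_entry_def by auto

lemma pfaffian_term_swap_pair:
  assumes skew: "\<And>x y. x < 2*n \<Longrightarrow> y < 2*n \<Longrightarrow> A $$ (y,x) = - A $$ (x,y)"
    and p: "p permutes {0..<2*n}" and i: "i < n"
  shows "pfaffian_term n A (p \<circ> transpose (2*i) (2*i+1)) = pfaffian_term n A p"
proof -
  let ?t = "transpose (2*i) (2*i+1)"
  have t: "?t permutes {0..<2*n}" using i by (intro permutes_swap_id) auto
  have "permutation p" "permutation ?t"
    using p t permutation_permutes by blast+
  then have sign: "sign (p \<circ> ?t) = - sign p"
    using i by (simp add: sign_compose sign_swap_id)
  define g where "g j = A $$ (p (2*j), p (2*j+1))" for j
  define g' where "g' j = A $$ ((p \<circ> ?t) (2*j), (p \<circ> ?t) (2*j+1))" for j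
  have "g' i = A $$ (p (2*i+1), p (2*i))" unfolding g'_def by (simp add: transpose_def)
  also have "\<dots> = - g i"
    unfolding g_def using skew[of "p (2*i)" "p (2*i+1)"] permutes_in_image[OF p] i by simp
  finally have g'_i: "g' i = - g i" .
  have g'_other: "g' j = g j" if "j \<in> {..<n} - {i}" for j
    using that unfolding g_def g'_def by (auto simp: transpose_def)
  have "(\<Prod>j<n. g' j) = g' i * (\<Prod>j\<in>{..<n}-{i}. g' j)" using i by (intro prod.remove) auto
  also have "\<dots> = - (g i * (\<Prod>j\<in>{..<n}-{i}. g j))" using g'_i g'_other by simp
  also have "g i * (\<Prod>j\<in>{..<n}-{i}. g j) = (\<Prod>j<n. g j)" using i by (intro prod.remove[symmetric]) auto
  finally show ?thesis unfolding pfaffian_term_def g_def g'_def sign by simp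
qed

definition pair_swaps :: "nat \<Rightarrow> nat set \<Rightarrow> nat \<Rightarrow> nat" where
  "pair_swaps n K x = (if x < 2*n \<and> x div 2 \<in> K then (if even x then x+1 else x-1) else x)"

lemma pair_swaps_insert:
  assumes "i \<notin> K" "i < n"
  shows "pair_swaps n (insert i K) = transpose (2*i) (2*i+1) \<circ> pair_swaps n K"
proof
  fix x :: nat
  consider "x = 2*i" | "x = 2*i+1" | "x div 2 \<noteq> i" by linarith
  then show "pair_swaps n (insert i K) x = (transpose (2*i) (2*i+1) \<circ> pair_swaps n K) x"
  proof cases
    case 3
    then have "x - 1 \<noteq> 2*i" "x - 1 \<noteq> 2*i+1" if "odd x" using that by presburger+
    moreover have "x + 1 \<noteq> 2*i" "x + 1 \<noteq> 2*i+1" if "even x" using that 3 by presburger+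
    moreover have "x \<noteq> 2*i" "x \<noteq> 2*i+1" using 3 by auto
    ultimately show ?thesis by (auto simp: pair_swaps_def transpose_def)
  qed (use assms in \<open>auto simp: pair_swaps_def transpose_def\<close>)
qed

lemma pair_swaps_permutes_invariant:
  assumes "K \<subseteq> {..<n}"
    and skew: "\<And>x y. x < 2*n \<Longrightarrow> y < 2*n \<Longrightarrow> A $$ (y,x) = - A $$ (x,y)"
  shows "pair_swaps n K permutes {0..<2*n} \<and>
    (\<forall>p. p permutes {0..<2*n} \<longrightarrow> pfaffian_term n A (p \<circ> pair_swaps n K) = pfaffian_term n A p)"
proof -
  have "finite K" using assms(1) finite_subset by blast
  then show ?thesis using assms(1)
  proof (induction K rule: finite_induct)
    case empty
    have "pair_swaps n {} = id" by (auto simp: pair_swaps_def)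
    then show ?case using permutes_id[of "{0..<2*n}"] by (simp add: id_def)
  next
    case (insert i K)
    then have i: "i < n" by simp
    let ?t = "transpose (2*i) (2*i+1)"
    have t: "?t permutes {0..<2*n}" using i by (intro permutes_swap_id) auto
    have eq: "pair_swaps n (insert i K) = ?t \<circ> pair_swaps n K"
      using insert i by (intro pair_swaps_insert) auto
    from insert have IH: "pair_swaps n K permutes {0..<2*n}"
      "\<And>p. p permutes {0..<2*n} \<Longrightarrow> pfaffian_term n A (p \<circ> pair_swaps n K) = pfaffian_term n A p"
      by (auto simp: comp_def)
    have "pfaffian_term n A (p \<circ> pair_swaps n (insert i K)) = pfaffian_term n A p"
      if p: "p permutes {0..<2*n}" for p
    proof -
      have "pfaffian_term n A (p \<circ> pair_swaps n (insert i K)) = pfaffian_term n A (p \<circ> ?t)"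
        unfolding eq o_assoc by (rule IH(2)[OF permutes_compose[OF t p]])
      also have "\<dots> = pfaffian_term n A p" by (rule pfaffian_term_swap_pair[OF skew p i])
      finally show ?thesis .
    qed
    then show ?case unfolding eq using permutes_compose[OF IH(1) t] by blast
  qed
qed

definition pair_lift :: "nat \<Rightarrow> (nat \<Rightarrow> nat) \<Rightarrow> nat \<Rightarrow> nat" where
  "pair_lift n m x = (if x < 2*n then 2 * m (x div 2) + x mod 2 else x)"

lemma pair_lift_permutes_sign:
  assumes "m permutes {0..<n}"
  shows "pair_lift n m permutes {0..<2*n} \<and> sign (pair_lift n m) = 1"
  using assms finite_atLeastLessThan
proof (induction rule: permutes_induct)
  case id
  have "pair_lift n id = id" by (auto simp: pair_lift_def)
  then show ?case using permutes_id[of "{0..<2*n}"] by (simp add: id_def)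
next
  case (swap a b p)
  then have ab: "a < n" "b < n" "a \<noteq> b" by auto
  let ?t1 = "transpose (2*a) (2*b)" and ?t2 = "transpose (2*a+1) (2*b+1)"
  have lift_swap: "2 * transpose a b y + r = ?t1 (?t2 (2*y+r))" if "r < 2" for y r :: nat
    using that unfolding transpose_def by (auto; presburger)
  have eq: "pair_lift n (transpose a b \<circ> p) = ?t1 \<circ> (?t2 \<circ> pair_lift n p)"
  proof
    fix x
    show "pair_lift n (transpose a b \<circ> p) x = (?t1 \<circ> (?t2 \<circ> pair_lift n p)) x"
    proof (cases "x < 2*n")
      case True
      then show ?thesis using lift_swap[of "x mod 2" "p (x div 2)"] by (simp add: pair_lift_def)
    next
      case False
      then show ?thesis using ab by (auto simp: pair_lift_def transpose_def)
    qed
  qed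
  have t1: "?t1 permutes {0..<2*n}" and t2: "?t2 permutes {0..<2*n}"
    using ab by (auto intro!: permutes_swap_id)
  from swap.IH have d: "pair_lift n p permutes {0..<2*n}" and s: "sign (pair_lift n p) = 1"
    by auto
  have d2: "?t2 \<circ> pair_lift n p permutes {0..<2*n}" by (rule permutes_compose[OF d t2])
  have "permutation ?t1" "permutation ?t2" "permutation (pair_lift n p)"
    using t1 t2 d permutation_permutes by blast+
  then have "sign (?t1 \<circ> (?t2 \<circ> pair_lift n p)) = sign ?t1 * (sign ?t2 * sign (pair_lift n p))"
    by (simp add: sign_compose permutation_compose)
  also have "\<dots> = 1" using ab s by (simp add: sign_swap_id)
  finally show ?case unfolding eq using permutes_compose[OF d2 t1] by blast
qed

lemma sign_pair_preserving:
  fixes n :: nat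
  assumes q: "q permutes {0..<2*n}"
    and pairs: "\<And>i. i < n \<Longrightarrow> even (q (2*i)) \<and> q (2*i+1) = q (2*i) + 1"
  shows "sign q = 1"
proof -
  define m where "m i = (if i < n then q (2*i) div 2 else i)" for i
  have "q = pair_lift n m"
  proof
    fix x
    show "q x = pair_lift n m x"
    proof (cases "x < 2*n")
      case True
      define i where "i = x div 2"
      have i: "i < n" using True unfolding i_def by simp
      have q_even: "2 * (q (2*i) div 2) = q (2*i)" using pairs[OF i] by simp
      have "x = 2*i \<and> x mod 2 = 0 \<or> x = 2*i+1 \<and> x mod 2 = 1"
        unfolding i_def by presburger
      then show ?thesis
        using True i q_even pairs[OF i] by (auto simp: pair_lift_def m_def i_def[symmetric])
    qed (use permutes_not_in[OF q] in \<open>simp add: pair_lift_def\<close>)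
  qed
  moreover have "m permutes {0..<n}"
  proof (rule inj_on_nat_permutes)
    show "inj_on m {0..<n}"
    proof (rule inj_onI)
      fix i j assume ij: "i \<in> {0..<n}" "j \<in> {0..<n}" "m i = m j"
      moreover have "even (q (2*i))" "even (q (2*j))" using pairs ij by auto
      ultimately have "q (2*i) = q (2*j)"
        unfolding m_def using ij by (auto elim!: evenE)
      then have "2*i = 2*j" by (rule injD[OF permutes_inj[OF q]])
      then show "i = j" by simp
    qed
    have "q (2*i) < 2*n" if "i < n" for i
      using permutes_in_image[OF q, of "2*i"] that by simp
    then show "m \<in> {0..<n} \<rightarrow> {0..<n}"
      unfolding m_def by fastforce
  qed (auto simp: m_def)
  ultimately show ?thesis using pair_lift_permutes_sign by blast
qed

lemma symplectic_mat_skew: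
  "x < 2*n \<Longrightarrow> y < 2*n \<Longrightarrow> symplectic_mat n $$ (y,x) = - symplectic_mat n $$ (x,y)"
  unfolding symplectic_mat_def by (simp add: symplectic_entry_skew[of x y])

lemma pfaffian_term_symplectic:
  assumes "p permutes {0..<2*n}"
  shows "pfaffian_term n (symplectic_mat n) p =
         signof p * (\<Prod>i<n. symplectic_entry (p (2*i)) (p (2*i+1)))"
proof -
  have "p x < 2*n" if "x < 2*n" for x
    using permutes_in_image[OF assms] that by simp
  then show ?thesis
    unfolding pfaffian_term_def symplectic_mat_def by (intro arg_cong2[where f = "(*)"] prod.cong) auto
qed

text \<open>A non-vanishing term maps every pair \<open>{2i, 2i+1}\<close> onto a pair; undoing the swaps inside
  the pairs leaves a permutation of pairs, which is even.\<close>
lemma pfaffian_term_symplectic_nonneg: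
  assumes p: "p permutes {0..<2*n}"
  shows "pfaffian_term n (symplectic_mat n) p \<ge> (0 :: 'a::linordered_idom)"
proof (cases "\<exists>i<n. symplectic_entry (p (2*i)) (p (2*i+1)) = (0::'a)")
  case True
  then show ?thesis
    unfolding pfaffian_term_symplectic[OF p] by (subst prod_zero) auto
next
  case False
  define K where "K = {i. i < n \<and> odd (p (2*i))}"
  define q where "q = p \<circ> pair_swaps n K"
  have "K \<subseteq> {..<n}" unfolding K_def by auto
  from pair_swaps_permutes_invariant[where A = "symplectic_mat n :: 'a mat", OF this symplectic_mat_skew] p
  have q: "q permutes {0..<2*n}"
    and term_q: "pfaffian_term n (symplectic_mat n) q = (pfaffian_term n (symplectic_mat n) p :: 'a)"
    unfolding q_def by (auto intro: permutes_compose)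
  have pairs: "even (q (2*i)) \<and> q (2*i+1) = q (2*i) + 1" if i: "i < n" for i
  proof (cases "i \<in> K")
    case True
    then have "q (2*i) = p (2*i+1)" "q (2*i+1) = p (2*i)" "odd (p (2*i))"
      using i by (auto simp: q_def pair_swaps_def K_def)
    then show ?thesis using False i unfolding symplectic_entry_def by (auto split: if_splits)
  next
    case False
    then have "q (2*i) = p (2*i)" "q (2*i+1) = p (2*i+1)" "even (p (2*i))"
      using i by (auto simp: q_def pair_swaps_def K_def)
    then show ?thesis using \<open>\<not> (\<exists>i<n. _)\<close> i unfolding symplectic_entry_def by (auto split: if_splits)
  qed
  then have "sign q = 1" by (rule sign_pair_preserving[OF q])
  moreover have "(\<Prod>i<n. symplectic_entry (q (2*i)) (q (2*i+1))) = (1::'a)"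
    using pairs by (intro prod.neutral) (auto simp: symplectic_entry_def)
  ultimately have "pfaffian_term n (symplectic_mat n) q = (1::'a)"
    unfolding pfaffian_term_symplectic[OF q] by simp
  then show ?thesis using term_q by simp
qed

lemma pfaffian_sum_symplectic_pos:
  "pfaffian_sum n (symplectic_mat n) > (0 :: 'a::linordered_idom)"
proof -
  have "pfaffian_term n (symplectic_mat n) id = (1::'a)"
    unfolding pfaffian_term_symplectic[OF permutes_id] by (simp add: symplectic_entry_def)
  moreover have "pfaffian_term n (symplectic_mat n) id \<le> (pfaffian_sum n (symplectic_mat n) :: 'a)"
    unfolding pfaffian_sum_def
    by (rule member_le_sum) (auto intro: pfaffian_term_symplectic_nonneg permutes_id[unfolded id_def] finite_permutations)
  ultimately show ?thesis by simp
qed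

section \<open>Operators on the Fock space\<close>

lemma op_mul_assoc: "op_mul L (op_mul L X Y) Z S T = op_mul L X (op_mul L Y Z) S T"
proof -
  have "op_mul L (op_mul L X Y) Z S T = (\<Sum>V\<in>Pow {1..L}. \<Sum>U\<in>Pow {1..L}. X S U * Y U V * Z V T)"
    unfolding op_mul_def by (simp add: sum_distrib_right)
  also have "\<dots> = (\<Sum>U\<in>Pow {1..L}. \<Sum>V\<in>Pow {1..L}. X S U * Y U V * Z V T)" by (rule sum.swap)
  also have "\<dots> = op_mul L X (op_mul L Y Z) S T"
    unfolding op_mul_def by (simp add: sum_distrib_left mult.assoc)
  finally show ?thesis .
qed

lemma op_mul_linear_left: "op_mul L (\<lambda>S T. a * X S T + b * Y S T) Z S T =
    a * op_mul L X Z S T + b * op_mul L Y Z S T"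
  unfolding op_mul_def by (simp add: sum.distrib sum_distrib_left algebra_simps)

lemma op_mul_linear_right: "op_mul L X (\<lambda>S T. a * Y S T + b * Z S T) S T =
    a * op_mul L X Y S T + b * op_mul L X Z S T"
  unfolding op_mul_def by (simp add: sum.distrib sum_distrib_left algebra_simps)

lemma op_mul_cong_right:
  assumes "T \<subseteq> {1..L}" "\<And>U. U \<subseteq> {1..L} \<Longrightarrow> Y U T = Y' U T"
  shows "op_mul L X Y S T = op_mul L X Y' S T"
  unfolding op_mul_def using assms by (intro sum.cong) auto

lemma op_mul_cong_left:
  assumes "S \<subseteq> {1..L}" "\<And>U. U \<subseteq> {1..L} \<Longrightarrow> X S U = X' S U"
  shows "op_mul L X Y S T = op_mul L X' Y S T"
  unfolding op_mul_def using assms by (intro sum.cong) auto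

lemma op_mul_scalar_minus_right:
  assumes "T \<subseteq> {1..L}"
  shows "op_mul L X (\<lambda>U V. (if U = V then c else 0) - Y U V) S T = c * X S T - op_mul L X Y S T"
proof -
  have "op_mul L X (\<lambda>U V. (if U = V then c else 0) - Y U V) S T
      = (\<Sum>U\<in>Pow {1..L}. X S U * (if U = T then c else 0)) - op_mul L X Y S T"
    unfolding op_mul_def by (simp add: right_diff_distrib sum_subtractf)
  also have "(\<Sum>U\<in>Pow {1..L}. X S U * (if U = T then c else 0)) = (\<Sum>U\<in>Pow {1..L}. if U = T then X S U * c else 0)"
    by (rule sum.cong) auto
  also have "(\<Sum>U\<in>Pow {1..L}. if U = T then X S U * c else 0) = c * X S T"
    using assms by (subst sum.delta) auto
  finally show ?thesis .
qed

lemma op_mul_scalar_minus_left: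
  assumes "S \<subseteq> {1..L}"
  shows "op_mul L (\<lambda>U V. (if U = V then c else 0) - Y U V) X S T = c * X S T - op_mul L Y X S T"
proof -
  have "op_mul L (\<lambda>U V. (if U = V then c else 0) - Y U V) X S T
      = (\<Sum>U\<in>Pow {1..L}. (if S = U then c else 0) * X U T) - op_mul L Y X S T"
    unfolding op_mul_def by (simp add: left_diff_distrib sum_subtractf)
  also have "(\<Sum>U\<in>Pow {1..L}. (if S = U then c else 0) * X U T) = (\<Sum>U\<in>Pow {1..L}. if S = U then c * X U T else 0)"
    by (rule sum.cong) auto
  also have "(\<Sum>U\<in>Pow {1..L}. if S = U then c * X U T else 0) = c * X S T"
    using assms by (subst sum.delta') auto
  finally show ?thesis .
qed

lemma op_mul_double_sum_left:
  "op_mul L (\<lambda>S T. c * (\<Sum>p\<in>P. \<Sum>q\<in>Q. g p q * F p q S T)) Z S T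
     = c * (\<Sum>p\<in>P. \<Sum>q\<in>Q. g p q * op_mul L (F p q) Z S T)"
proof -
  have "op_mul L (\<lambda>S T. c * (\<Sum>p\<in>P. \<Sum>q\<in>Q. g p q * F p q S T)) Z S T
      = (\<Sum>U\<in>Pow {1..L}. \<Sum>p\<in>P. \<Sum>q\<in>Q. c * (g p q * (F p q S U * Z U T)))"
    unfolding op_mul_def by (simp add: sum_distrib_left sum_distrib_right mult.assoc)
  also have "\<dots> = (\<Sum>p\<in>P. \<Sum>U\<in>Pow {1..L}. \<Sum>q\<in>Q. c * (g p q * (F p q S U * Z U T)))"
    by (rule sum.swap)
  also have "\<dots> = (\<Sum>p\<in>P. \<Sum>q\<in>Q. \<Sum>U\<in>Pow {1..L}. c * (g p q * (F p q S U * Z U T)))"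
    by (rule sum.cong[OF refl], rule sum.swap)
  also have "\<dots> = c * (\<Sum>p\<in>P. \<Sum>q\<in>Q. g p q * op_mul L (F p q) Z S T)"
    unfolding op_mul_def by (simp add: sum_distrib_left)
  finally show ?thesis .
qed

lemma op_mul_double_sum_right:
  "op_mul L Z (\<lambda>S T. c * (\<Sum>p\<in>P. \<Sum>q\<in>Q. g p q * F p q S T)) S T
     = c * (\<Sum>p\<in>P. \<Sum>q\<in>Q. g p q * op_mul L Z (F p q) S T)"
proof -
  have "op_mul L Z (\<lambda>S T. c * (\<Sum>p\<in>P. \<Sum>q\<in>Q. g p q * F p q S T)) S T
      = (\<Sum>U\<in>Pow {1..L}. \<Sum>p\<in>P. \<Sum>q\<in>Q. c * (g p q * (Z S U * F p q U T)))"
    unfolding op_mul_def by (simp add: sum_distrib_left sum_distrib_right ac_simps)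
  also have "\<dots> = (\<Sum>p\<in>P. \<Sum>U\<in>Pow {1..L}. \<Sum>q\<in>Q. c * (g p q * (Z S U * F p q U T)))"
    by (rule sum.swap)
  also have "\<dots> = (\<Sum>p\<in>P. \<Sum>q\<in>Q. \<Sum>U\<in>Pow {1..L}. c * (g p q * (Z S U * F p q U T)))"
    by (rule sum.cong[OF refl], rule sum.swap)
  also have "\<dots> = c * (\<Sum>p\<in>P. \<Sum>q\<in>Q. g p q * op_mul L Z (F p q) S T)"
    unfolding op_mul_def by (simp add: sum_distrib_left)
  finally show ?thesis .
qed

lemma op_mul_adj: "op_mul L (op_adj X) (op_adj Y) S T = cnj (op_mul L Y X T S)"
  unfolding op_mul_def op_adj_def by (simp add: mult.commute)

section \<open>The canonical anticommutation relations\<close>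

definition jw_sign :: "nat \<Rightarrow> nat set \<Rightarrow> complex" where
  "jw_sign j T = (-1) ^ card {k\<in>T. k < j}"

lemma jw_sign_square[simp]: "jw_sign j T * jw_sign j T = 1"
  unfolding jw_sign_def by (simp flip: power_add)

lemma jw_sign_insert:
  assumes "finite T" "k \<notin> T"
  shows "jw_sign j (insert k T) = (if k < j then - jw_sign j T else jw_sign j T)"
proof (cases "k < j")
  case True
  then have "{x\<in>insert k T. x < j} = insert k {x\<in>T. x < j}" by auto
  moreover have "k \<notin> {x\<in>T. x < j}" using assms by auto
  moreover have "finite {x\<in>T. x < j}" using assms by auto
  ultimately show ?thesis using True unfolding jw_sign_def by simp
next
  case False
  then have "{x\<in>insert k T. x < j} = {x\<in>T. x < j}" by auto
  then show ?thesis using False unfolding jw_sign_def by simp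
qed

lemma jw_sign_remove:
  assumes "finite T" "k \<in> T"
  shows "jw_sign j (T - {k}) = (if k < j then - jw_sign j T else jw_sign j T)"
proof -
  have T: "T = insert k (T - {k})" using assms by auto
  have "jw_sign j T = (if k < j then - jw_sign j (T - {k}) else jw_sign j (T - {k}))"
    by (subst T, rule jw_sign_insert) (use assms in auto)
  then show ?thesis by auto
qed

lemma jw_sign_insert_self[simp]: "jw_sign k (insert k T) = jw_sign k T"
proof -
  have "{x\<in>insert k T. x < k} = {x\<in>T. x < k}" by auto
  then show ?thesis unfolding jw_sign_def by simp
qed

lemma jw_sign_remove_self[simp]: "jw_sign k (T - {k}) = jw_sign k T"
proof -
  have "{x\<in>T - {k}. x < k} = {x\<in>T. x < k}" by auto
  then show ?thesis unfolding jw_sign_def by simp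
qed

lemma ann_eq_jw_sign: "ann j S T = (if j \<in> T \<and> S = T - {j} then jw_sign j T else 0)"
  unfolding ann_def jw_sign_def by simp

lemma cre_eq_jw_sign: "cre j S T = (if j \<in> S \<and> T = S - {j} then jw_sign j S else 0)"
  unfolding cre_def op_adj_def ann_def jw_sign_def by simp

lemma op_mul_ann:
  assumes "T \<subseteq> {1..L}"
  shows "op_mul L X (ann k) S T = (if k \<in> T then X S (T - {k}) * jw_sign k T else 0)"
proof -
  have "op_mul L X (ann k) S T =
      (\<Sum>U\<in>Pow {1..L}. if U = T - {k} then (if k \<in> T then X S U * jw_sign k T else 0) else 0)"
    unfolding op_mul_def ann_eq_jw_sign by (rule sum.cong) auto
  also have "\<dots> = (if k \<in> T then X S (T - {k}) * jw_sign k T else 0)"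
    using assms by (subst sum.delta) auto
  finally show ?thesis .
qed

lemma op_mul_cre:
  assumes "T \<subseteq> {1..L}" "k \<in> {1..L}"
  shows "op_mul L X (cre k) S T = (if k \<notin> T then X S (insert k T) * jw_sign k T else 0)"
proof -
  have "op_mul L X (cre k) S T =
      (\<Sum>U\<in>Pow {1..L}. if U = insert k T then (if k \<notin> T then X S U * jw_sign k T else 0) else 0)"
    unfolding op_mul_def cre_eq_jw_sign by (rule sum.cong) auto
  also have "\<dots> = (if k \<notin> T then X S (insert k T) * jw_sign k T else 0)"
    using assms by (subst sum.delta) auto
  finally show ?thesis .
qed

lemma ann_anticommute:
  assumes "T \<subseteq> {1..L}"
  shows "op_mul L (ann j) (ann k) S T = - op_mul L (ann k) (ann j) S T"
proof -
  have fT: "finite T" using assms finite_subset by blast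
  show ?thesis
  proof (cases "j = k")
    case True then show ?thesis using assms by (simp add: op_mul_ann ann_eq_jw_sign)
  next
    case False
    have "(if k < j then -1 else 1) = - (if j < k then -1 else (1::complex))" using False by auto
    then show ?thesis using assms False fT
      by (auto simp: op_mul_ann ann_eq_jw_sign jw_sign_remove Diff_insert2[symmetric] insert_commute)
  qed
qed

lemma cre_anticommute:
  assumes "S \<subseteq> {1..L}"
  shows "op_mul L (cre j) (cre k) S T = - op_mul L (cre k) (cre j) S T"
  unfolding cre_def op_mul_adj using ann_anticommute[of S L k j T] assms by simp

lemma ann_cre_anticommute:
  assumes S: "S \<subseteq> {1..L}" and T: "T \<subseteq> {1..L}" and k: "k \<in> {1..L}"
  shows "op_mul L (ann j) (cre k) S T + op_mul L (cre k) (ann j) S T = (if j = k \<and> S = T then 1 else 0)"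
proof -
  have fT: "finite T" using T finite_subset by blast
  have fS: "finite S" using S finite_subset by blast
  have L1: "op_mul L (ann j) (cre k) S T =
      (if k \<notin> T \<and> j \<in> insert k T \<and> S = insert k T - {j} then jw_sign j (insert k T) * jw_sign k T else 0)"
    using T k by (simp add: op_mul_cre ann_eq_jw_sign)
  have L2: "op_mul L (cre k) (ann j) S T =
      (if j \<in> T \<and> k \<in> S \<and> T - {j} = S - {k} then jw_sign k S * jw_sign j T else 0)"
    using T by (simp add: op_mul_ann cre_eq_jw_sign)
  show ?thesis
  proof (cases "j = k")
    case True
    show ?thesis
    proof (cases "k \<in> T")
      case True
      have "(k \<in> S \<and> T - {k} = S - {k}) = (S = T)" using True by blast
      then show ?thesis unfolding L1 L2 using True \<open>j = k\<close> by auto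
    next
      case False
      have "insert k T - {k} = T" using False by simp
      then show ?thesis unfolding L1 L2 using False \<open>j = k\<close> by auto
    qed
  next
    case False
    have e1: "insert k T - {j} = insert k (T - {j})" using False by blast
    have e2: "j \<in> T \<Longrightarrow> (k \<in> S \<and> T - {j} = S - {k}) = (k \<notin> T \<and> S = insert k (T - {j}))"
      using False by blast
    show ?thesis
    proof (cases "j \<in> T \<and> k \<notin> T \<and> S = insert k (T - {j})")
      case True
      then have jT: "j \<in> T" and kT: "k \<notin> T" and Seq: "S = insert k (T - {j})" by auto
      have s1: "jw_sign j (insert k T) = (if k < j then - jw_sign j T else jw_sign j T)"
        using jw_sign_insert[OF fT kT] by simp
      have s2: "jw_sign k S = (if j < k then - jw_sign k T else jw_sign k T)"
        unfolding Seq using jw_sign_remove[OF fT jT, of k] by simp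
      have "(if k < j then -1 else 1) = - (if j < k then -1 else (1::complex))" using False by auto
      then have "jw_sign j (insert k T) * jw_sign k T + jw_sign k S * jw_sign j T = 0"
        unfolding s1 s2 by (auto simp: algebra_simps)
      then show ?thesis unfolding L1 L2 using True e1 e2 False by auto
    next
      case False
      then show ?thesis unfolding L1 L2 using e1 e2 \<open>j \<noteq> k\<close> by auto
    qed
  qed
qed

section \<open>Majorana operators and quadratic Hamiltonians\<close>

definition maj_mode :: "nat \<Rightarrow> nat \<Rightarrow> nat" where
  "maj_mode L p = (if p < L then p+1 else p-L+1)"

definition maj_ann_coeff :: "nat \<Rightarrow> real \<Rightarrow> nat \<Rightarrow> complex" where
  "maj_ann_coeff L \<theta> p = (if p < L then cis (\<theta>/2) else - \<i> * cis (\<theta>/2))"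

definition maj_cre_coeff :: "nat \<Rightarrow> real \<Rightarrow> nat \<Rightarrow> complex" where
  "maj_cre_coeff L \<theta> p = (if p < L then cis (-\<theta>/2) else \<i> * cis (-\<theta>/2))"

lemma bvec_eq_ann_cre: "bvec L \<theta> p =
    (\<lambda>S T. maj_ann_coeff L \<theta> p * ann (maj_mode L p) S T + maj_cre_coeff L \<theta> p * cre (maj_mode L p) S T)"
proof (cases "p < L")
  case True
  have "(2*p+1+1) div 2 = p+1" by simp
  then show ?thesis using True unfolding bvec_def maj_def maj_ann_coeff_def maj_cre_coeff_def maj_mode_def by simp
next
  case False
  have "(2*(p-L)+2) div 2 = p-L+1" by simp
  then show ?thesis using False unfolding bvec_def maj_def maj_ann_coeff_def maj_cre_coeff_def maj_mode_def by simp
qed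

lemma op_mul_bvec_bvec: "op_mul L (bvec L \<theta> p) (bvec L \<theta> q) S T =
   maj_ann_coeff L \<theta> p * maj_ann_coeff L \<theta> q * op_mul L (ann (maj_mode L p)) (ann (maj_mode L q)) S T
 + maj_ann_coeff L \<theta> p * maj_cre_coeff L \<theta> q * op_mul L (ann (maj_mode L p)) (cre (maj_mode L q)) S T
 + maj_cre_coeff L \<theta> p * maj_ann_coeff L \<theta> q * op_mul L (cre (maj_mode L p)) (ann (maj_mode L q)) S T
 + maj_cre_coeff L \<theta> p * maj_cre_coeff L \<theta> q * op_mul L (cre (maj_mode L p)) (cre (maj_mode L q)) S T"
  unfolding bvec_eq_ann_cre op_mul_linear_left op_mul_linear_right by (simp add: algebra_simps)

lemma maj_mode_range: "p < 2*L \<Longrightarrow> maj_mode L p \<in> {1..L}"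
  unfolding maj_mode_def by auto

lemma maj_coeff_anticommute:
  assumes "p < 2*L" "q < 2*L" "maj_mode L p = maj_mode L q"
  shows "maj_ann_coeff L \<theta> q * maj_cre_coeff L \<theta> p + maj_cre_coeff L \<theta> q * maj_ann_coeff L \<theta> p =
         (if p = q then 2 else 0)"
proof -
  have c: "cis (\<theta>/2) * cis (-\<theta>/2) = 1" "cis (-\<theta>/2) * cis (\<theta>/2) = 1"
    by (simp_all add: cis_mult)
  have "p = q \<or> (p < L \<and> \<not> q < L) \<or> (\<not> p < L \<and> q < L)"
    using assms unfolding maj_mode_def by (auto split: if_splits)
  then show ?thesis unfolding maj_ann_coeff_def maj_cre_coeff_def using c
    by (auto simp: algebra_simps)
qed

lemma bvec_anticommute:
  assumes p: "p < 2*L" and q: "q < 2*L" and S: "S \<subseteq> {1..L}" and T: "T \<subseteq> {1..L}"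
  shows "op_mul L (bvec L \<theta> p) (bvec L \<theta> q) S T + op_mul L (bvec L \<theta> q) (bvec L \<theta> p) S T
     = (if p = q \<and> S = T then 2 else 0)"
proof -
  define m where "m = maj_mode L p"
  define n where "n = maj_mode L q"
  have m: "m \<in> {1..L}" and n: "n \<in> {1..L}" using maj_mode_range p q unfolding m_def n_def by auto
  define \<delta> where "\<delta> = (if m = n \<and> S = T then (1::complex) else 0)"
  have f1: "op_mul L (ann n) (ann m) S T = - op_mul L (ann m) (ann n) S T" by (rule ann_anticommute[OF T])
  have f2: "op_mul L (cre n) (cre m) S T = - op_mul L (cre m) (cre n) S T" by (rule cre_anticommute[OF S])
  have f3: "op_mul L (ann n) (cre m) S T = \<delta> - op_mul L (cre m) (ann n) S T"
    using ann_cre_anticommute[OF S T m, of n] unfolding \<delta>_def by (auto simp: algebra_simps)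
  have f4: "op_mul L (cre n) (ann m) S T = \<delta> - op_mul L (ann m) (cre n) S T"
    using ann_cre_anticommute[OF S T n, of m] unfolding \<delta>_def by (auto simp: algebra_simps)
  have "op_mul L (bvec L \<theta> p) (bvec L \<theta> q) S T + op_mul L (bvec L \<theta> q) (bvec L \<theta> p) S T
     = \<delta> * (maj_ann_coeff L \<theta> q * maj_cre_coeff L \<theta> p + maj_cre_coeff L \<theta> q * maj_ann_coeff L \<theta> p)"
    unfolding op_mul_bvec_bvec m_def[symmetric] n_def[symmetric] f1 f2 f3 f4 by (simp add: algebra_simps)
  also have "\<dots> = (if p = q \<and> S = T then 2 else 0)"
  proof (cases "m = n")
    case True
    then show ?thesis unfolding \<delta>_def using maj_coeff_anticommute[OF p q, of \<theta>] m_def n_def by auto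
  next
    case False
    then have "p \<noteq> q" unfolding m_def n_def by auto
    then show ?thesis unfolding \<delta>_def using False by auto
  qed
  finally show ?thesis .
qed

lemma op_mul_bvec_pair_bvec:
  assumes p: "p < 2*L" and q: "q < 2*L" and r: "r < 2*L" and S: "S \<subseteq> {1..L}" and T: "T \<subseteq> {1..L}"
  shows "op_mul L (op_mul L (bvec L \<theta> p) (bvec L \<theta> q)) (bvec L \<theta> r) S T
    = (if q = r then 2 else 0) * bvec L \<theta> p S T - (if p = r then 2 else 0) * bvec L \<theta> q S T
      + op_mul L (bvec L \<theta> r) (op_mul L (bvec L \<theta> p) (bvec L \<theta> q)) S T"
proof -
  let ?b = "bvec L \<theta>"
  have e2: "op_mul L (?b p) (op_mul L (?b q) (?b r)) S T
      = op_mul L (?b p) (\<lambda>U V. (if U = V then (if q = r then 2 else 0) else 0) - op_mul L (?b r) (?b q) U V) S T"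
  proof (rule op_mul_cong_right[OF T])
    fix U assume U: "U \<subseteq> {1..L}"
    from bvec_anticommute[OF q r U T, of \<theta>] show "op_mul L (?b q) (?b r) U T =
      (if U = T then (if q = r then 2 else 0) else 0) - op_mul L (?b r) (?b q) U T"
      by (auto simp: algebra_simps)
  qed
  have e4: "op_mul L (op_mul L (?b p) (?b r)) (?b q) S T
      = op_mul L (\<lambda>U V. (if U = V then (if p = r then 2 else 0) else 0) - op_mul L (?b r) (?b p) U V) (?b q) S T"
  proof (rule op_mul_cong_left[OF S])
    fix U assume U: "U \<subseteq> {1..L}"
    from bvec_anticommute[OF p r S U, of \<theta>] show "op_mul L (?b p) (?b r) S U =
      (if S = U then (if p = r then 2 else 0) else 0) - op_mul L (?b r) (?b p) S U"
      by (auto simp: algebra_simps)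
  qed
  have "op_mul L (op_mul L (?b p) (?b q)) (?b r) S T = op_mul L (?b p) (op_mul L (?b q) (?b r)) S T"
    by (rule op_mul_assoc)
  also have "\<dots> = (if q = r then 2 else 0) * ?b p S T - op_mul L (?b p) (op_mul L (?b r) (?b q)) S T"
    unfolding e2 by (rule op_mul_scalar_minus_right[OF T])
  also have "op_mul L (?b p) (op_mul L (?b r) (?b q)) S T = op_mul L (op_mul L (?b p) (?b r)) (?b q) S T"
    by (rule op_mul_assoc[symmetric])
  also have "\<dots> = (if p = r then 2 else 0) * ?b q S T - op_mul L (op_mul L (?b r) (?b p)) (?b q) S T"
    unfolding e4 by (rule op_mul_scalar_minus_left[OF S])
  also have "op_mul L (op_mul L (?b r) (?b p)) (?b q) S T = op_mul L (?b r) (op_mul L (?b p) (?b q)) S T"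
    by (rule op_mul_assoc)
  finally show ?thesis by (simp add: algebra_simps)
qed

lemma skew_mat_entry:
  assumes "C \<in> carrier_mat N N" "transpose_mat C = - C" "p < N" "r < N"
  shows "C $$ (p, r) = - C $$ (r, p)"
proof -
  have e1: "transpose_mat C $$ (r, p) = C $$ (p, r)" using assms(1,3,4) by simp
  have e2: "(- C) $$ (r, p) = - C $$ (r, p)" using assms(1,3,4) by simp
  show ?thesis using e1 e2 assms(2) by metis
qed

lemma maj_quad_commutator_bvec:
  assumes C: "C \<in> carrier_mat (2*L) (2*L)" and sk: "transpose_mat C = - C" and r: "r < 2*L"
    and S: "S \<subseteq> {1..L}" and T: "T \<subseteq> {1..L}"
  shows "op_mul L (maj_quad L \<theta> C) (bvec L \<theta> r) S T - op_mul L (bvec L \<theta> r) (maj_quad L \<theta> C) S T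
     = - 2 * \<i> * (\<Sum>q\<in>{..<2*L}. complex_of_real (C $$ (r,q)) * bvec L \<theta> q S T)"
proof -
  let ?b = "bvec L \<theta>"
  let ?c = "\<lambda>p q. complex_of_real (C $$ (p,q))"
  let ?I = "{..<2*L}"
  have "op_mul L (maj_quad L \<theta> C) (?b r) S T - op_mul L (?b r) (maj_quad L \<theta> C) S T
     = (\<i>/2) * (\<Sum>p\<in>?I. \<Sum>q\<in>?I. ?c p q * (op_mul L (op_mul L (?b p) (?b q)) (?b r) S T
           - op_mul L (?b r) (op_mul L (?b p) (?b q)) S T))"
    unfolding maj_quad_def op_mul_double_sum_left op_mul_double_sum_right
    by (simp add: right_diff_distrib sum_subtractf)
  also have "\<dots> = (\<i>/2) * (\<Sum>p\<in>?I. \<Sum>q\<in>?I. ?c p q * ((if q = r then 2 else 0) * ?b p S T)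
          - ?c p q * ((if p = r then 2 else 0) * ?b q S T))"
  proof (intro arg_cong[where f = "\<lambda>x. (\<i>/2) * x"] sum.cong refl)
    fix p q assume "p \<in> ?I" "q \<in> ?I"
    then have p: "p < 2*L" and q: "q < 2*L" by auto
    have "op_mul L (op_mul L (?b p) (?b q)) (?b r) S T - op_mul L (?b r) (op_mul L (?b p) (?b q)) S T
       = (if q = r then 2 else 0) * ?b p S T - (if p = r then 2 else 0) * ?b q S T"
      using op_mul_bvec_pair_bvec[OF p q r S T, of \<theta>] by simp
    then show "?c p q * (op_mul L (op_mul L (?b p) (?b q)) (?b r) S T - op_mul L (?b r) (op_mul L (?b p) (?b q)) S T)
       = ?c p q * ((if q = r then 2 else 0) * ?b p S T) - ?c p q * ((if p = r then 2 else 0) * ?b q S T)"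
      by (simp add: right_diff_distrib)
  qed
  also have "\<dots> = (\<i>/2) * ((\<Sum>p\<in>?I. \<Sum>q\<in>?I. ?c p q * ((if q = r then 2 else 0) * ?b p S T))
          - (\<Sum>p\<in>?I. \<Sum>q\<in>?I. ?c p q * ((if p = r then 2 else 0) * ?b q S T)))"
    by (simp add: sum_subtractf)
  also have "(\<Sum>p\<in>?I. \<Sum>q\<in>?I. ?c p q * ((if q = r then 2 else 0) * ?b p S T)) =
      (\<Sum>p\<in>?I. 2 * ?c p r * ?b p S T)"
  proof (rule sum.cong[OF refl])
    fix p
    have "(\<Sum>q\<in>?I. ?c p q * ((if q = r then 2 else 0) * ?b p S T)) =
        (\<Sum>q\<in>?I. if q = r then 2 * ?c p r * ?b p S T else 0)"
      by (rule sum.cong) auto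
    also have "\<dots> = 2 * ?c p r * ?b p S T" using r by (subst sum.delta) auto
    finally show "(\<Sum>q\<in>?I. ?c p q * ((if q = r then 2 else 0) * ?b p S T)) = 2 * ?c p r * ?b p S T" .
  qed
  also have "(\<Sum>p\<in>?I. 2 * ?c p r * ?b p S T) = - (\<Sum>p\<in>?I. 2 * ?c r p * ?b p S T)"
    by (simp add: sum_negf[symmetric] skew_mat_entry[OF C sk _ r])
  also have "(\<Sum>p\<in>?I. \<Sum>q\<in>?I. ?c p q * ((if p = r then 2 else 0) * ?b q S T))
      = (\<Sum>p\<in>?I. if p = r then (\<Sum>q\<in>?I. 2 * ?c r q * ?b q S T) else 0)"
    by (rule sum.cong) (auto simp: algebra_simps)
  also have "\<dots> = (\<Sum>q\<in>?I. 2 * ?c r q * ?b q S T)" using r by (subst sum.delta) auto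
  finally show ?thesis by (simp add: sum_distrib_left algebra_simps)
qed

lemma bvec_vacuum_single:
  "bvec L \<theta> q {} {j} = (if maj_mode L q = j then maj_ann_coeff L \<theta> q else 0)"
proof -
  have "{k\<in>{j}. k < j} = {}" by auto
  then have sgj: "jw_sign j {j} = 1" unfolding jw_sign_def by (subst \<open>{k\<in>{j}. k < j} = {}\<close>) simp
  have "ann m {} {j} = (if m = j then 1 else 0)" for m
    unfolding ann_eq_jw_sign using sgj by auto
  moreover have "cre m {} {j} = 0" for m unfolding cre_eq_jw_sign by simp
  ultimately show ?thesis unfolding bvec_eq_ann_cre by simp
qed

text \<open>\<open>[H, b\<^sub>r] = -2i \<Sum>\<^sub>q C\<^sub>r\<^sub>q b\<^sub>q\<close>; its matrix element between the vacuum and \<open>a\<^sub>j\<^sup>*|0\<rangle>\<close> is a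
  non-zero multiple of \<open>C\<^bsub>r,j-1\<^esub> - i C\<^bsub>r,L+j-1\<^esub>\<close>.\<close>
lemma maj_quad_zero_imp_row_zero:
  assumes C: "C \<in> carrier_mat (2*L) (2*L)" and sk: "transpose_mat C = - C"
    and z: "\<And>S T. S \<subseteq> {1..L} \<Longrightarrow> T \<subseteq> {1..L} \<Longrightarrow> maj_quad L \<theta> C S T = 0"
    and r: "r < 2*L" and j: "j \<in> {1..L}"
  shows "C $$ (r, j-1) = 0 \<and> C $$ (r, L+j-1) = 0"
proof -
  let ?b = "bvec L \<theta>" and ?e = "cis (\<theta>/2)"
  let ?x = "complex_of_real (C $$ (r,j-1))" and ?y = "complex_of_real (C $$ (r,L+j-1))"
  have S: "{} \<subseteq> {1..L}" and T: "{j} \<subseteq> {1..L}" using j by auto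
  have "op_mul L (maj_quad L \<theta> C) (?b r) {} {j} = 0"
    unfolding op_mul_def using z[OF S] by (intro sum.neutral) auto
  moreover have "op_mul L (?b r) (maj_quad L \<theta> C) {} {j} = 0"
    unfolding op_mul_def using z[OF _ T] by (intro sum.neutral) auto
  ultimately have "(\<Sum>q<2*L. complex_of_real (C $$ (r,q)) * ?b q {} {j}) = 0"
    using maj_quad_commutator_bvec[OF C sk r S T, of \<theta>] by simp
  moreover have "(\<Sum>q<2*L. complex_of_real (C $$ (r,q)) * ?b q {} {j}) =
      (\<Sum>q<2*L. (if q = j-1 then ?x * maj_ann_coeff L \<theta> (j-1) else 0)
        + (if q = L+j-1 then ?y * maj_ann_coeff L \<theta> (L+j-1) else 0))"
    unfolding bvec_vacuum_single using j by (intro sum.cong refl) (auto simp: maj_mode_def)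
  moreover have "j-1 < 2*L" "L+j-1 < 2*L"
    using j by auto
  then have "(\<Sum>q<2*L. (if q = j-1 then ?x * maj_ann_coeff L \<theta> (j-1) else 0)
        + (if q = L+j-1 then ?y * maj_ann_coeff L \<theta> (L+j-1) else 0)) =
      ?x * maj_ann_coeff L \<theta> (j-1) + ?y * maj_ann_coeff L \<theta> (L+j-1)"
    by (simp add: sum.distrib)
  moreover have "maj_ann_coeff L \<theta> (j-1) = ?e" "maj_ann_coeff L \<theta> (L+j-1) = - \<i> * ?e"
    using j unfolding maj_ann_coeff_def by auto
  ultimately have "?e * (?x - \<i> * ?y) = 0"
    by (simp add: algebra_simps)
  then have "?x - \<i> * ?y = 0"
    by (simp add: cis_neq_zero)
  then have "Re (?x - \<i> * ?y) = 0" "Im (?x - \<i> * ?y) = 0"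
    by simp_all
  then show ?thesis by simp
qed

lemma maj_quad_zero_imp_zero:
  assumes C: "C \<in> carrier_mat (2*L) (2*L)" and sk: "transpose_mat C = - C"
    and z: "\<And>S T. S \<subseteq> {1..L} \<Longrightarrow> T \<subseteq> {1..L} \<Longrightarrow> maj_quad L \<theta> C S T = 0"
  shows "C = 0\<^sub>m (2*L) (2*L)"
proof (rule eq_matI)
  fix r q assume "r < dim_row (0\<^sub>m (2*L) (2*L))" "q < dim_col (0\<^sub>m (2*L) (2*L))"
  then have r: "r < 2*L" and q: "q < 2*L" by auto
  note row_zero = maj_quad_zero_imp_row_zero[OF C sk z r]
  have "C $$ (r,q) = 0"
  proof (cases "q < L")
    case True
    then show ?thesis using row_zero[of "q+1"] by auto
  next
    case False
    then have "q - L + 1 \<in> {1..L}" "L + (q - L + 1) - 1 = q" using q by auto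
    then show ?thesis using row_zero[of "q-L+1"] by auto
  qed
  then show "C $$ (r,q) = 0\<^sub>m (2*L) (2*L) $$ (r,q)" using r q by simp
qed (use C in auto)

lemma maj_quad_diff:
  assumes "A \<in> carrier_mat (2*L) (2*L)" and "B \<in> carrier_mat (2*L) (2*L)"
  shows "maj_quad L \<theta> (A - B) S T = maj_quad L \<theta> A S T - maj_quad L \<theta> B S T"
proof -
  let ?X = "\<lambda>p q. op_mul L (bvec L \<theta> p) (bvec L \<theta> q) S T"
  have "(\<Sum>p<2*L. \<Sum>q<2*L. complex_of_real ((A - B) $$ (p,q)) * ?X p q) =
        (\<Sum>p<2*L. \<Sum>q<2*L. complex_of_real (A $$ (p,q)) * ?X p q - complex_of_real (B $$ (p,q)) * ?X p q)"
    using assms by (intro sum.cong refl) (simp add: left_diff_distrib)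
  then show ?thesis unfolding maj_quad_def by (simp add: sum_subtractf right_diff_distrib)
qed

lemma the_skew_maj_quad_eq:
  assumes C: "C \<in> carrier_mat (2*L) (2*L)" and skew: "transpose_mat C = - C"
    and H: "op_eq L H (maj_quad L \<theta> C)"
  shows "(THE A. A \<in> carrier_mat (2*L) (2*L) \<and> transpose_mat A = - A \<and> op_eq L H (maj_quad L \<theta> A)) = C"
proof (rule the_equality)
  fix A assume "A \<in> carrier_mat (2*L) (2*L) \<and> transpose_mat A = - A \<and> op_eq L H (maj_quad L \<theta> A)"
  then have A: "A \<in> carrier_mat (2*L) (2*L)" and skew_A: "transpose_mat A = - A"
    and H_A: "op_eq L H (maj_quad L \<theta> A)" by auto
  have "transpose_mat (A - C) = - (A - C)"
    using A C skew skew_A by (intro eq_matI) (auto simp: transpose_minus)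
  moreover have "maj_quad L \<theta> (A - C) S T = 0" if "S \<subseteq> {1..L}" "T \<subseteq> {1..L}" for S T
    using H H_A that unfolding maj_quad_diff[OF A C] op_eq_def by auto
  ultimately have "A - C = 0\<^sub>m (2*L) (2*L)"
    using maj_quad_zero_imp_zero[OF minus_carrier_mat[OF C]] by blast
  show "A = C"
  proof (rule eq_matI)
    fix i j assume ij: "i < dim_row C" "j < dim_col C"
    then have "(A - C) $$ (i,j) = 0" using C \<open>A - C = 0\<^sub>m (2*L) (2*L)\<close> by simp
    then show "A $$ (i,j) = C $$ (i,j)" using A C ij by simp
  qed (use A C in auto)
qed (use C skew H in auto)

lemma maj_pair_eq_hopping_pairing:
  assumes m: "m \<in> {1..L}" and n: "n \<in> {1..L}" and "m \<noteq> n"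
    and S: "S \<subseteq> {1..L}" and T: "T \<subseteq> {1..L}"
  shows "\<i> * op_mul L (bvec L \<theta> (L+m-1)) (bvec L \<theta> (n-1)) S T =
    - op_mul L (cre m) (ann n) S T - op_mul L (cre n) (ann m) S T
    + cis \<theta> * op_mul L (ann m) (ann n) S T + cis (-\<theta>) * op_mul L (cre n) (cre m) S T"
proof -
  let ?e = "cis (\<theta>/2)" and ?e' = "cis (-\<theta>/2)"
  have modes: "maj_mode L (L+m-1) = m" "maj_mode L (n-1) = n"
    using m n by (auto simp: maj_mode_def)
  have coeffs: "maj_ann_coeff L \<theta> (L+m-1) = - \<i> * ?e" "maj_cre_coeff L \<theta> (L+m-1) = \<i> * ?e'"
    "maj_ann_coeff L \<theta> (n-1) = ?e" "maj_cre_coeff L \<theta> (n-1) = ?e'"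
    using m n by (auto simp: maj_ann_coeff_def maj_cre_coeff_def)
  have "?e * ?e = cis \<theta>" "?e * ?e' = 1" "?e' * ?e = 1" "?e' * ?e' = cis (-\<theta>)"
    by (simp_all add: cis_mult)
  then have products: "\<i> * (- \<i> * ?e * ?e) = cis \<theta>" "\<i> * (- \<i> * ?e * ?e') = 1"
    "\<i> * (\<i> * ?e' * ?e) = -1" "\<i> * (\<i> * ?e' * ?e') = - cis (-\<theta>)"
    by (simp_all add: algebra_simps)
  have ac: "op_mul L (ann m) (cre n) S T = - op_mul L (cre n) (ann m) S T"
    using ann_cre_anticommute[OF S T n, of m] \<open>m \<noteq> n\<close> by (simp add: eq_neg_iff_add_eq_0)
  have cc: "op_mul L (cre m) (cre n) S T = - op_mul L (cre n) (cre m) S T"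
    by (rule cre_anticommute[OF S])
  have "\<i> * op_mul L (bvec L \<theta> (L+m-1)) (bvec L \<theta> (n-1)) S T =
      \<i> * (- \<i> * ?e * ?e) * op_mul L (ann m) (ann n) S T
    + \<i> * (- \<i> * ?e * ?e') * op_mul L (ann m) (cre n) S T
    + \<i> * (\<i> * ?e' * ?e) * op_mul L (cre m) (ann n) S T
    + \<i> * (\<i> * ?e' * ?e') * op_mul L (cre m) (cre n) S T"
    unfolding op_mul_bvec_bvec modes coeffs by (simp add: algebra_simps)
  then show ?thesis unfolding products ac cc by (simp add: algebra_simps)
qed

lemma maj_quad_antisymmetrized:
  fixes F :: "nat \<Rightarrow> nat \<Rightarrow> real"
  assumes diag: "\<And>p. F p p = 0" and S: "S \<subseteq> {1..L}" and T: "T \<subseteq> {1..L}"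
  shows "maj_quad L \<theta> (mat (2*L) (2*L) (\<lambda>(p,q). F p q - F q p)) S T =
         \<i> * (\<Sum>p<2*L. \<Sum>q<2*L. complex_of_real (F p q) * op_mul L (bvec L \<theta> p) (bvec L \<theta> q) S T)"
proof -
  let ?X = "\<lambda>p q. op_mul L (bvec L \<theta> p) (bvec L \<theta> q) S T"
  have swap: "complex_of_real (F p q) * ?X q p = - (complex_of_real (F p q) * ?X p q)"
    if "p < 2*L" "q < 2*L" for p q
  proof (cases "p = q")
    case False
    then have "?X q p = - ?X p q"
      using bvec_anticommute[OF that S T, of \<theta>] by (simp add: eq_neg_iff_add_eq_0 add.commute)
    then show ?thesis by simp
  qed (simp add: diag)
  have "(\<Sum>p<2*L. \<Sum>q<2*L. complex_of_real (F q p) * ?X p q) =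
        (\<Sum>p<2*L. \<Sum>q<2*L. complex_of_real (F p q) * ?X q p)"
    by (rule sum.swap)
  also have "\<dots> = - (\<Sum>p<2*L. \<Sum>q<2*L. complex_of_real (F p q) * ?X p q)"
    by (simp add: swap sum_negf)
  finally have "(\<Sum>p<2*L. \<Sum>q<2*L. complex_of_real (F q p) * ?X p q) =
                - (\<Sum>p<2*L. \<Sum>q<2*L. complex_of_real (F p q) * ?X p q)" .
  then show ?thesis
    unfolding maj_quad_def by (simp add: left_diff_distrib sum_subtractf)
qed

lemma sum_sum_if_eq:
  assumes "finite A" "finite B"
  shows "(\<Sum>p\<in>A. \<Sum>q\<in>B. if P q \<and> p = h q then f p q else 0) = (\<Sum>q\<in>{q\<in>B. P q \<and> h q \<in> A}. f (h q) q)"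
proof -
  have "(\<Sum>p\<in>A. \<Sum>q\<in>B. if P q \<and> p = h q then f p q else 0) =
        (\<Sum>q\<in>B. \<Sum>p\<in>A. if p = h q then (if P q then f p q else 0) else 0)"
    by (subst sum.swap) (intro sum.cong refl, auto)
  also have "\<dots> = (\<Sum>q\<in>B. if P q \<and> h q \<in> A then f (h q) q else 0)"
    using assms by (intro sum.cong refl) simp
  finally show ?thesis using assms by (simp add: sum.inter_filter)
qed

section \<open>The Kitaev chain at flux \<open>0\<close> and \<open>\<pi>\<close>\<close>

text \<open>In the ordering of \<^const>\<open>bvec\<close>, index \<open>j < L\<close> is \<open>b\<^bsub>2j+1\<^esub>\<close> and index \<open>L+j-1\<close> is
  \<open>b\<^bsub>2j\<^esub>\<close>. The couplings are those of \<open>i w b\<^bsub>2j\<^esub> b\<^bsub>2j+1\<^esub>\<close> and \<open>i c w b\<^bsub>2L\<^esub> b\<^bsub>1\<^esub>\<close> with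
  \<open>c = cos \<alpha>\<close>; the \<open>sin \<alpha>\<close> term vanishes at the endpoints \<open>\<alpha> = 0, \<pi>\<close>.\<close>
definition kit_coupling :: "nat \<Rightarrow> real \<Rightarrow> real \<Rightarrow> nat \<Rightarrow> nat \<Rightarrow> real" where
  "kit_coupling L w c p q =
     (if 1 \<le> q \<and> q < L \<and> p = L+q-1 then w else 0) + (if q = 0 \<and> p = 2*L-1 then c*w else 0)"

definition kit_mat :: "nat \<Rightarrow> real \<Rightarrow> real \<Rightarrow> real mat" where
  "kit_mat L w c = mat (2*L) (2*L) (\<lambda>(p,q). kit_coupling L w c p q - kit_coupling L w c q p)"

lemma kit_mat_carrier: "kit_mat L w c \<in> carrier_mat (2*L) (2*L)"
  unfolding kit_mat_def by simp

lemma kit_mat_skew: "transpose_mat (kit_mat L w c) = - kit_mat L w c"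
  unfolding kit_mat_def by (rule eq_matI) auto

lemma maj_quad_kit_mat:
  assumes L: "L \<ge> 2" and S: "S \<subseteq> {1..L}" and T: "T \<subseteq> {1..L}"
  shows "maj_quad L \<theta> (kit_mat L w c) S T =
     (\<Sum>j\<in>{1..<L}. w * (\<i> * op_mul L (bvec L \<theta> (L+j-1)) (bvec L \<theta> j) S T))
     + c * w * (\<i> * op_mul L (bvec L \<theta> (2*L-1)) (bvec L \<theta> 0) S T)"
proof -
  let ?X = "\<lambda>p q. op_mul L (bvec L \<theta> p) (bvec L \<theta> q) S T"
  have if_zero: "complex_of_real (if P then a else 0) * x = (if P then complex_of_real a * x else 0)"
    for P a x by simp
  have "kit_coupling L w c p p = 0" for p
  proof -
    have "p \<noteq> L+p-1" "\<not> (p = 0 \<and> p = 2*L-1)" using L by arith+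
    then show ?thesis unfolding kit_coupling_def by auto
  qed
  then have "maj_quad L \<theta> (kit_mat L w c) S T =
      \<i> * (\<Sum>p<2*L. \<Sum>q<2*L. complex_of_real (kit_coupling L w c p q) * ?X p q)"
    unfolding kit_mat_def by (rule maj_quad_antisymmetrized[OF _ S T])
  also have "(\<Sum>p<2*L. \<Sum>q<2*L. complex_of_real (kit_coupling L w c p q) * ?X p q) =
      (\<Sum>p<2*L. \<Sum>q<2*L. if (1 \<le> q \<and> q < L) \<and> p = L+q-1 then w * ?X p q else 0)
    + (\<Sum>p<2*L. \<Sum>q<2*L. if q = 0 \<and> p = 2*L-1 then complex_of_real (c * w) * ?X p q else 0)"
    unfolding kit_coupling_def of_real_add distrib_right sum.distrib if_zero by (simp only: conj_assoc)
  also have "(\<Sum>p<2*L. \<Sum>q<2*L. if (1 \<le> q \<and> q < L) \<and> p = L+q-1 then w * ?X p q else 0) =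
      (\<Sum>j\<in>{1..<L}. w * ?X (L+j-1) j)"
  proof -
    have "{q\<in>{..<2*L}. (1 \<le> q \<and> q < L) \<and> L+q-1 \<in> {..<2*L}} = {1..<L}" by auto
    then show ?thesis
      using sum_sum_if_eq[of "{..<2*L}" "{..<2*L}" "\<lambda>q. 1 \<le> q \<and> q < L" "\<lambda>q. L+q-1"] by simp
  qed
  also have "(\<Sum>p<2*L. \<Sum>q<2*L. if q = 0 \<and> p = 2*L-1 then complex_of_real (c * w) * ?X p q else 0) =
      complex_of_real (c * w) * ?X (2*L-1) 0"
  proof -
    have "{q\<in>{..<2*L}. q = 0 \<and> 2*L-1 \<in> {..<2*L}} = {0}" using L by auto
    then show ?thesis
      using sum_sum_if_eq[of "{..<2*L}" "{..<2*L}" "\<lambda>q. q = 0" "\<lambda>q. 2*L-1"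
        "\<lambda>p q. complex_of_real (c * w) * ?X p q"] by simp
  qed
  finally show ?thesis by (simp add: sum_distrib_left algebra_simps)
qed

lemma kit_H_eq_maj_quad:
  assumes L: "L \<ge> 2" and "cis \<alpha> = complex_of_real c" "cis (-\<alpha>) = complex_of_real c"
  shows "op_eq L (kit_H L w \<theta> \<alpha>) (maj_quad L \<theta> (kit_mat L w c))"
  unfolding op_eq_def
proof (intro ballI)
  fix S T assume "S \<in> Pow {1..L}" "T \<in> Pow {1..L}"
  then have S: "S \<subseteq> {1..L}" and T: "T \<subseteq> {1..L}" by auto
  have bond: "\<i> * op_mul L (bvec L \<theta> (L+j-1)) (bvec L \<theta> j) S T =
      - op_mul L (cre j) (ann (j+1)) S T - op_mul L (cre (j+1)) (ann j) S T
      + cis \<theta> * op_mul L (ann j) (ann (j+1)) S T + cis (-\<theta>) * op_mul L (cre (j+1)) (cre j) S T"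
    if "j \<in> {1..<L}" for j
    using maj_pair_eq_hopping_pairing[of j L "j+1", OF _ _ _ S T] that by simp
  have boundary: "\<i> * op_mul L (bvec L \<theta> (2*L-1)) (bvec L \<theta> 0) S T =
      - op_mul L (cre L) (ann 1) S T - op_mul L (cre 1) (ann L) S T
      + cis \<theta> * op_mul L (ann L) (ann 1) S T + cis (-\<theta>) * op_mul L (cre 1) (cre L) S T"
    using maj_pair_eq_hopping_pairing[of L L 1, OF _ _ _ S T] L by (simp add: mult_2)
  have bonds: "(\<Sum>j\<in>{1..<L}. w * (\<i> * op_mul L (bvec L \<theta> (L+j-1)) (bvec L \<theta> j) S T)) =
      (\<Sum>j\<in>{1..<L}. w * (- op_mul L (cre j) (ann (j+1)) S T - op_mul L (cre (j+1)) (ann j) S T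
      + cis \<theta> * op_mul L (ann j) (ann (j+1)) S T + cis (-\<theta>) * op_mul L (cre (j+1)) (cre j) S T))"
    by (intro sum.cong refl, subst bond) auto
  have "{1..L-1} = {1..<L}" using L by auto
  then show "kit_H L w \<theta> \<alpha> S T = maj_quad L \<theta> (kit_mat L w c) S T"
    unfolding kit_H_def maj_quad_kit_mat[OF L S T] bonds boundary assms(2,3)
    by (simp add: algebra_simps)
qed

lemma kit_A_eq_kit_mat:
  assumes "L \<ge> 2" and "cis \<alpha> = complex_of_real c" "cis (-\<alpha>) = complex_of_real c"
  shows "kit_A L w \<theta> \<alpha> = kit_mat L w c"
  unfolding kit_A_def
  by (rule the_skew_maj_quad_eq[OF kit_mat_carrier kit_mat_skew kit_H_eq_maj_quad[OF assms]])

definition monomial_mat :: "nat \<Rightarrow> (nat \<Rightarrow> nat) \<Rightarrow> (nat \<Rightarrow> 'a::comm_ring_1) \<Rightarrow> 'a mat" where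
  "monomial_mat N \<tau> g = mat N N (\<lambda>(a,k). if k = \<tau> a then g a else 0)"

lemma monomial_congruence_entry:
  assumes A: "A \<in> carrier_mat N N" and x: "x < N" and y: "y < N" and \<tau>: "\<And>z. z < N \<Longrightarrow> \<tau> z < N"
  shows "(monomial_mat N \<tau> g * A * transpose_mat (monomial_mat N \<tau> g)) $$ (x,y) =
         g x * A $$ (\<tau> x, \<tau> y) * g y"
proof -
  have "(monomial_mat N \<tau> g * A * transpose_mat (monomial_mat N \<tau> g)) $$ (x,y) =
      (\<Sum>k\<in>{0..<N}. \<Sum>l\<in>{0..<N}. if k = \<tau> x then (if l = \<tau> y then g x * A $$ (k,l) * g y else 0) else 0)"
    unfolding monomial_mat_def using x y
    by (subst congruence_mat_entry[OF _ A x y]) (auto intro!: sum.cong)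
  also have "\<dots> = (\<Sum>k\<in>{0..<N}. if k = \<tau> x then g x * A $$ (k, \<tau> y) * g y else 0)"
    using \<tau>[OF y] by (intro sum.cong refl) auto
  also have "\<dots> = g x * A $$ (\<tau> x, \<tau> y) * g y"
    using \<tau>[OF x] by simp
  finally show ?thesis .
qed

lemma multrow_mat_eq_monomial_mat:
  "multrow_mat N k a = monomial_mat N id (\<lambda>i. if i = k then a else 1)"
  unfolding multrow_mat_def monomial_mat_def by (rule eq_matI) auto

lemma invertible_multrow_mat_minus_one:
  assumes "k < n"
  shows "invertible_mat (multrow_mat n k (-1 :: 'a::field))"
proof -
  have "multrow_mat n k (-1) * multrow_mat n k (-1) = (1\<^sub>m n :: 'a mat)"
    using multrow_mat_inv[OF assms, of "-1 :: 'a"] by simp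
  then show ?thesis
    unfolding invertible_mat_def inverts_mat_def by auto
qed

lemma kit_mat_flux_flip:
  assumes L: "L \<ge> 2"
  shows "multrow_mat (2*L) 0 (-1) * kit_mat L w 1 * transpose_mat (multrow_mat (2*L) 0 (-1)) =
         kit_mat L w (-1)"
proof (rule eq_matI)
  fix x y assume "x < dim_row (kit_mat L w (-1))" "y < dim_col (kit_mat L w (-1))"
  then have x: "x < 2*L" and y: "y < 2*L" by (auto simp: kit_mat_def)
  have "(multrow_mat (2*L) 0 (-1) * kit_mat L w 1 * transpose_mat (multrow_mat (2*L) 0 (-1))) $$ (x,y) =
      (if x = 0 then -1 else 1) * kit_mat L w 1 $$ (x, y) * (if y = 0 then -1 else 1)"
    unfolding multrow_mat_eq_monomial_mat by (subst monomial_congruence_entry[OF kit_mat_carrier x y]) auto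
  also have "\<dots> = kit_mat L w (-1) $$ (x, y)"
    using L x y by (cases "x = 0"; cases "y = 0") (auto simp: kit_mat_def kit_coupling_def)
  finally show "(multrow_mat (2*L) 0 (-1) * kit_mat L w 1 * transpose_mat (multrow_mat (2*L) 0 (-1))) $$ (x,y) =
      kit_mat L w (-1) $$ (x, y)" .
qed (auto simp: kit_mat_def)

text \<open>Reorders the Majoranas into the pairs \<open>(b\<^bsub>2i+1\<^esub>, b\<^bsub>2i\<^esub>)\<close>, \<open>b\<^bsub>0\<^esub> := b\<^bsub>2L\<^esub>\<close>, that are
  coupled by \<open>H(0)\<close>.\<close>
definition kit_pairing :: "nat \<Rightarrow> nat \<Rightarrow> nat" where
  "kit_pairing L a = (if even a then a div 2 else if a = 1 then 2*L-1 else L + a div 2 - 1)"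

lemma kit_pairing_less: "L \<ge> 2 \<Longrightarrow> a < 2*L \<Longrightarrow> kit_pairing L a < 2*L"
  unfolding kit_pairing_def by auto

lemma kit_coupling_eq_0: "L \<ge> 1 \<Longrightarrow> p < L \<or> L \<le> q \<Longrightarrow> kit_coupling L w c p q = 0"
  unfolding kit_coupling_def by auto

lemma kit_pairing_even: "kit_pairing L (2*i) = i"
  and kit_pairing_odd_ge: "i < L \<Longrightarrow> L \<le> kit_pairing L (2*i+1)"
  unfolding kit_pairing_def by auto

lemma kit_coupling_pairing_odd:
  assumes "L \<ge> 2" "i < L" "k < L"
  shows "kit_coupling L w 1 (kit_pairing L (2*i+1)) k = (if i = k then w else 0)"
proof (cases "i = 0")
  case True
  then show ?thesis using assms by (auto simp: kit_coupling_def kit_pairing_def)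
next
  case False
  then have "kit_pairing L (2*i+1) = L+i-1" by (simp add: kit_pairing_def)
  then show ?thesis using assms False by (auto simp: kit_coupling_def)
qed

lemma kit_coupling_pairing:
  assumes L: "L \<ge> 2" and a: "a < 2*L" and b: "b < 2*L"
  shows "kit_coupling L w 1 (kit_pairing L a) (kit_pairing L b)
       - kit_coupling L w 1 (kit_pairing L b) (kit_pairing L a) = - w * symplectic_entry a b"
proof -
  have "a div 2 < L" "a = 2*(a div 2) \<or> a = 2*(a div 2)+1"
    and "b div 2 < L" "b = 2*(b div 2) \<or> b = 2*(b div 2)+1"
    using a b by presburger+
  then obtain i k where i: "i < L" "a = 2*i \<or> a = 2*i+1" and k: "k < L" "b = 2*k \<or> b = 2*k+1"
    by blast
  have L1: "L \<ge> 1" using L by simp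
  have parity: "2*m \<noteq> Suc (2*m')" for m m' :: nat by presburger
  from i(2) k(2) show ?thesis
    using kit_coupling_eq_0[OF L1] kit_pairing_odd_ge i(1) k(1)
      kit_coupling_pairing_odd[OF L i(1) k(1)] kit_coupling_pairing_odd[OF L k(1) i(1)]
    by (elim disjE) (simp_all add: kit_pairing_even symplectic_entry_def parity)
qed

lemma kit_mat_congruent_symplectic:
  assumes L: "L \<ge> 2"
  shows "monomial_mat (2*L) (kit_pairing L) (\<lambda>_. 1) * kit_mat L w 1 *
           transpose_mat (monomial_mat (2*L) (kit_pairing L) (\<lambda>_. 1)) = (-w) \<cdot>\<^sub>m symplectic_mat L"
proof (rule eq_matI)
  fix x y assume "x < dim_row ((-w) \<cdot>\<^sub>m symplectic_mat L)" "y < dim_col ((-w) \<cdot>\<^sub>m symplectic_mat L)"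
  then have x: "x < 2*L" and y: "y < 2*L" by (auto simp: symplectic_mat_def)
  show "(monomial_mat (2*L) (kit_pairing L) (\<lambda>_. 1) * kit_mat L w 1 *
           transpose_mat (monomial_mat (2*L) (kit_pairing L) (\<lambda>_. 1))) $$ (x,y) =
        ((-w) \<cdot>\<^sub>m symplectic_mat L) $$ (x,y)"
    using x y kit_pairing_less[OF L x] kit_pairing_less[OF L y] kit_coupling_pairing[OF L x y, of w]
    by (subst monomial_congruence_entry[OF kit_mat_carrier x y kit_pairing_less[OF L]])
       (auto simp: kit_mat_def symplectic_mat_def)
qed (auto simp: symplectic_mat_def monomial_mat_def)

lemma pfaffian_sum_kit_mat_nonzero:
  assumes L: "L \<ge> 2" and "w \<noteq> 0"
  shows "pfaffian_sum L (kit_mat L w 1) \<noteq> 0"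
proof
  let ?Q = "monomial_mat (2*L) (kit_pairing L) (\<lambda>_. 1 :: real)"
  assume "pfaffian_sum L (kit_mat L w 1) = 0"
  moreover have "pfaffian_sum L ((-w) \<cdot>\<^sub>m symplectic_mat L) = det ?Q * pfaffian_sum L (kit_mat L w 1)"
    unfolding kit_mat_congruent_symplectic[OF L, symmetric]
    by (rule pfaffian_sum_congruence) (auto simp: monomial_mat_def kit_mat_carrier)
  ultimately have "(-w) ^ L * pfaffian_sum L (symplectic_mat L) = 0"
    by (simp add: pfaffian_sum_smult symplectic_mat_def)
  then show False
    using \<open>w \<noteq> 0\<close> pfaffian_sum_symplectic_pos[of L, where 'a = real] by simp
qed

section \<open>The \<open>\<int>\<^sub>2\<close> spectral flow\<close>

text \<open>Under congruence the Pfaffian picks up \<open>det M\<close>, so all admissible \<open>M\<close> share one determinant.\<close>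
lemma Sf2_congruence:
  assumes A: "A \<in> carrier_mat (2*n) (2*n)" and pf: "pfaffian_sum n A \<noteq> 0"
    and D: "D \<in> carrier_mat (2*n) (2*n)" "invertible_mat D"
  shows "Sf2 A (D * A * transpose_mat D) = sgn (det D)"
proof -
  let ?P = "\<lambda>s. \<exists>M \<in> carrier_mat (2*n) (2*n).
    invertible_mat M \<and> D * A * transpose_mat D = M * A * transpose_mat M \<and> s = sgn (det M)"
  have "det M = det D"
    if M: "M \<in> carrier_mat (2*n) (2*n)" "D * A * transpose_mat D = M * A * transpose_mat M" for M
  proof -
    have "det D * pfaffian_sum n A = det M * pfaffian_sum n A"
      unfolding pfaffian_sum_congruence[OF D(1) A, symmetric]
        pfaffian_sum_congruence[OF M(1) A, symmetric] M(2) ..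
    then show ?thesis using pf by simp
  qed
  then have unique: "s = sgn (det D)" if "?P s" for s
    using that by auto
  have "?P (sgn (det D))"
    using D by blast
  then have "(SOME s. ?P s) = sgn (det D)"
    by (rule someI2) (rule unique)
  then show ?thesis
    unfolding Sf2_def using A by simp
qed

theorem proposition3p12:
  fixes L :: nat and w \<theta> :: real
  assumes "L \<ge> 2" and "w \<noteq> 0"
  shows "Sf2 (kit_A L w \<theta> 0) (kit_A L w \<theta> pi) = -1"
proof -
  let ?D = "multrow_mat (2*L) 0 (-1 :: real)"
  have "kit_A L w \<theta> 0 = kit_mat L w 1"
    by (rule kit_A_eq_kit_mat[OF assms(1)]) simp_all
  moreover have "kit_A L w \<theta> pi = ?D * kit_mat L w 1 * transpose_mat ?D"
    unfolding kit_mat_flux_flip[OF assms(1)]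
    by (rule kit_A_eq_kit_mat[OF assms(1)]) (simp_all add: complex_eq_iff)
  moreover have "Sf2 (kit_mat L w 1) (?D * kit_mat L w 1 * transpose_mat ?D) = sgn (det ?D)"
    using assms(1) by (intro Sf2_congruence[OF kit_mat_carrier pfaffian_sum_kit_mat_nonzero[OF assms]
        multrow_mat_carrier invertible_multrow_mat_minus_one]) simp
  moreover have "det ?D = -1"
    using assms(1) by (simp add: det_multrow_mat)
  ultimately show ?thesis by simp
qed

end
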